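(* Let $\mathcal{A}$ be a separating union-closed family with base set $[n]$ and height $h=4$, and let $\mathcal{B}=\{B_1,B_2,B_3,B_4\}$ be a choice of $\mathcal{B}(\mathcal{A})$ with $|\mathcal{B}|=4$. Then $|\mathrm{irr}_{\mathcal{B}}(B_i)|=1$ for each $i \in \{1,2,3,4\}$.
   Context: A family of sets $\mathcal{A}$ is union-closed if it is a finite family of distinct finite sets with at least one nonempty member set, and $X,Y\in\mathcal{A}$ implies $X\cup Y\in\mathcal{A}$ (the empty set may be a member). For a family $\mathcal{F}$, $b(\mathcal{F})=\bigcup_{F\in\mathcal{F}}F$; the base set $b(\mathcal{A})$ is denoted $[n]=\{1,\dots,n\}$. $\mathcal{A}$ is separating if for any two distinct $x,y\in[n]$ there is $A\in\mathcal{A}$ containing exactly one of $x,y$. A chain in $\mathcal{A}$ is a subfamily any two distinct members of which are comparable under proper inclusion; the height $h$ of $\mathcal{A}$ is the maximum size of a chain in $\mathcal{A}$. For real $x\ge 0$, $\mathcal{A}_{<x}=\{A\in\mathcal{A} : |A|<x\}$. For $\mathcal{S}\subseteq\mathcal{A}$ and $S\in\mathcal{S}$, $\mathrm{irr}_{\mathcal{S}}(S)=\{s\in S : s\notin b(\mathcal{S}\setminus\{S\})\}$, and $\mathcal{S}$ is irredundant if $\mathrm{irr}_{\mathcal{S}}(S)\neq\emptyset$ for every $S\in\mathcal{S}$. With $B=b(\mathcal{A}_{<n/2})$, $\mathcal{B}(\mathcal{A})$ denotes any irredundant subfamily of $\mathcal{A}_{<n/2}$ of minimum size such that $b(\mathcal{B}(\mathcal{A}))=B$.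 *)

theory Defs
  imports Complex_Main
begin

definition union_closed :: "'a set set \<Rightarrow> bool" where
  "union_closed \<A> \<longleftrightarrow> finite \<A> \<and> (\<forall>X\<in>\<A>. finite X) \<and> (\<exists>X\<in>\<A>. X \<noteq> {}) \<and>
     (\<forall>X\<in>\<A>. \<forall>Y\<in>\<A>. X \<union> Y \<in> \<A>)"

definition separating :: "'a set set \<Rightarrow> bool" where
  "separating \<A> \<longleftrightarrow> (\<forall>x\<in>\<Union>\<A>. \<forall>y\<in>\<Union>\<A>. x \<noteq> y \<longrightarrow>
     (\<exists>A\<in>\<A>. (x \<in> A \<and> y \<notin> A) \<or> (y \<in> A \<and> x \<notin> A)))"

definition is_chain :: "'a set set \<Rightarrow> bool" where
  "is_chain \<C> \<longleftrightarrow> (\<forall>X\<in>\<C>. \<forall>Y\<in>\<C>. X \<noteq> Y \<longrightarrow> X \<subset> Y \<or> Y \<subset> X)"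

definition height :: "'a set set \<Rightarrow> nat" where
  "height \<A> = Max (card ` {\<C>. \<C> \<subseteq> \<A> \<and> is_chain \<C>})"

definition small_members :: "'a set set \<Rightarrow> real \<Rightarrow> 'a set set" where
  "small_members \<A> x = {A\<in>\<A>. real (card A) < x}"

definition irr :: "'a set set \<Rightarrow> 'a set \<Rightarrow> 'a set" where
  "irr \<S> S = {s\<in>S. s \<notin> \<Union>(\<S> - {S})}"

definition irredundant :: "'a set set \<Rightarrow> bool" where
  "irredundant \<S> \<longleftrightarrow> (\<forall>S\<in>\<S>. irr \<S> S \<noteq> {})"

definition is_B_choice :: "nat set set \<Rightarrow> nat \<Rightarrow> nat set set \<Rightarrow> bool" where
  "is_B_choice \<A> n \<B> \<longleftrightarrow>
     (let \<S> = small_members \<A> (real n / 2) in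
       \<B> \<subseteq> \<S> \<and> irredundant \<B> \<and> \<Union>\<B> = \<Union>\<S> \<and>
       (\<forall>\<B>'. \<B>' \<subseteq> \<S> \<and> irredundant \<B>' \<and> \<Union>\<B>' = \<Union>\<S> \<longrightarrow> card \<B> \<le> card \<B>'))"

end

theory Submission
  imports Defs
begin

text \<open>Let \<open>x \<noteq> y\<close> be irredundant elements of \<open>B \<in> \<B>\<close>, separated by \<open>A \<in> \<A>\<close> with
  \<open>x \<in> A\<close> and \<open>y \<notin> A\<close>. Adding the members of \<open>\<B> - {B}\<close> one at a time gives a chain of
  \<open>|\<B>| - 1\<close> partial unions in \<open>\<A>\<close>, each strictly larger than the previous one because
  the new member contributes an irredundant element. On top of it sit the union with \<open>A\<close>
  (gaining \<open>x\<close>) and then \<open>\<Union>\<A>\<close> (gaining \<open>y\<close>), a chain of size \<open>|\<B>| + 1\<close>.\<close>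

lemma union_closed_finite:
  "union_closed \<A> \<Longrightarrow> finite \<A>"
  by (simp add: union_closed_def)

lemma union_closed_Union_mem:
  assumes "union_closed \<A>" and "\<S> \<subseteq> \<A>" and "\<S> \<noteq> {}"
  shows "\<Union>\<S> \<in> \<A>"
proof -
  have "finite \<S>"
    using union_closed_finite[OF assms(1)] assms(2) finite_subset by blast
  then show ?thesis
    using assms(2,3)
  proof (induction \<S> rule: finite_induct)
    case (insert S \<S>)
    then show ?case
      using assms(1) unfolding union_closed_def by (cases "\<S> = {}") auto
  qed simp
qed

lemma card_chain_le_height:
  assumes "finite \<A>" and "\<C> \<subseteq> \<A>" and "is_chain \<C>"
  shows "card \<C> \<le> height \<A>"
  unfolding height_def using assms by (intro Max_ge) auto

lemma is_chain_insert_above: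
  assumes "is_chain \<C>" and "\<And>C. C \<in> \<C> \<Longrightarrow> C \<subset> T"
  shows "is_chain (insert T \<C>)"
  using assms unfolding is_chain_def by blast

lemma card_insert_above:
  assumes "finite \<C>" and "\<And>C. C \<in> \<C> \<Longrightarrow> C \<subset> T"
  shows "card (insert T \<C>) = Suc (card \<C>)"
  using assms by (intro card_insert_disjoint) blast+

lemma irredundant_subset:
  assumes "irredundant \<S>" and "\<T> \<subseteq> \<S>"
  shows "irredundant \<T>"
proof -
  have "irr \<S> S \<subseteq> irr \<T> S" for S
    using assms(2) unfolding irr_def by blast
  then show ?thesis
    using assms unfolding irredundant_def by blast
qed

lemma irredundant_chain_of_unions:
  assumes "union_closed \<A>" and "\<B> \<subseteq> \<A>" and "irredundant \<B>"
  shows "\<exists>\<C>\<subseteq>\<A>. is_chain \<C> \<and> card \<C> = card \<B> \<and> (\<forall>C\<in>\<C>. C \<subseteq> \<Union>\<B>)"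
proof -
  have "finite \<B>"
    using union_closed_finite[OF assms(1)] assms(2) finite_subset by blast
  then show ?thesis
    using assms(2,3)
  proof (induction \<B> rule: finite_induct)
    case empty
    show ?case by (intro exI[of _ "{}"]) (simp add: is_chain_def)
  next
    case (insert B \<B>)
    let ?T = "\<Union>(insert B \<B>)"
    have "\<B> \<subseteq> \<A>" and "irredundant \<B>"
      using insert.prems irredundant_subset[OF insert.prems(2) subset_insertI] by simp_all
    then obtain \<C> where \<C>: "\<C> \<subseteq> \<A>" "is_chain \<C>" "card \<C> = card \<B>" "\<forall>C\<in>\<C>. C \<subseteq> \<Union>\<B>"
      using insert.IH by blast
    obtain b where "b \<in> irr (insert B \<B>) B"
      using insert.prems(2) unfolding irredundant_def by blast
    then have "b \<in> B" and "b \<notin> \<Union>\<B>"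
      using insert.hyps(2) unfolding irr_def by auto
    then have "\<Union>\<B> \<subset> ?T"
      by blast
    then have below_T: "C \<subset> ?T" if "C \<in> \<C>" for C
      using \<C>(4) that by (meson subset_psubset_trans)
    have "finite \<C>"
      using union_closed_finite[OF assms(1)] \<C>(1) finite_subset by blast
    have "insert ?T \<C> \<subseteq> \<A>"
      using \<C>(1) union_closed_Union_mem[OF assms(1) insert.prems(1)] by blast
    moreover have "is_chain (insert ?T \<C>)"
      using is_chain_insert_above[OF \<C>(2) below_T] .
    moreover have "card (insert ?T \<C>) = card (insert B \<B>)"
      using card_insert_above[OF \<open>finite \<C>\<close> below_T] \<C>(3) insert.hyps by simp
    moreover have "\<forall>C\<in>insert ?T \<C>. C \<subseteq> ?T"
      using below_T by auto
    ultimately show ?case by blast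
  qed
qed

lemma card_less_height_if_irr_separated:
  assumes uc: "union_closed \<A>" and "\<B> \<subseteq> \<A>" and "irredundant \<B>" and "B \<in> \<B>"
    and x: "x \<in> irr \<B> B" and y: "y \<in> irr \<B> B"
    and A: "A \<in> \<A>" "x \<in> A" "y \<notin> A"
  shows "card \<B> < height \<A>"
proof -
  let ?\<B>' = "\<B> - {B}"
  let ?T\<^sub>1 = "\<Union>(insert A ?\<B>')" and ?T\<^sub>2 = "\<Union>\<A>"
  have fin: "finite \<A>"
    using union_closed_finite[OF uc] .
  obtain \<C> where \<C>: "\<C> \<subseteq> \<A>" "is_chain \<C>" "card \<C> = card ?\<B>'" "\<forall>C\<in>\<C>. C \<subseteq> \<Union>?\<B>'"
    using irredundant_chain_of_unions[OF uc, of ?\<B>'] irredundant_subset[OF assms(3)] assms(2)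
    by blast
  have "finite \<C>"
    using fin \<C>(1) finite_subset by blast
  have "x \<notin> \<Union>?\<B>'" and "y \<notin> \<Union>?\<B>'" and "y \<in> ?T\<^sub>2"
    using x y assms(2,4) unfolding irr_def by auto
  have "\<Union>?\<B>' \<subset> ?T\<^sub>1"
    using \<open>x \<notin> \<Union>?\<B>'\<close> A(2) by blast
  then have below_T\<^sub>1: "C \<subset> ?T\<^sub>1" if "C \<in> \<C>" for C
    using \<C>(4) that by (meson subset_psubset_trans)
  have "?T\<^sub>1 \<subseteq> ?T\<^sub>2" and "y \<notin> ?T\<^sub>1"
    using A assms(2) \<open>y \<notin> \<Union>?\<B>'\<close> by blast+
  then have T\<^sub>1_below_T\<^sub>2: "?T\<^sub>1 \<subset> ?T\<^sub>2"
    using \<open>y \<in> ?T\<^sub>2\<close> by blast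
  let ?\<C>\<^sub>1 = "insert ?T\<^sub>1 \<C>"
  have below_T\<^sub>2: "C \<subset> ?T\<^sub>2" if "C \<in> ?\<C>\<^sub>1" for C
    using below_T\<^sub>1 T\<^sub>1_below_T\<^sub>2 that by (metis insertE psubset_trans)
  have "insert A ?\<B>' \<subseteq> \<A>"
    using A(1) assms(2) by blast
  then have "?T\<^sub>1 \<in> \<A>"
    using union_closed_Union_mem[OF uc] by blast
  moreover have "?T\<^sub>2 \<in> \<A>"
    using union_closed_Union_mem[OF uc order_refl] A(1) by blast
  ultimately have "insert ?T\<^sub>2 ?\<C>\<^sub>1 \<subseteq> \<A>"
    using \<C>(1) by blast
  moreover have "is_chain (insert ?T\<^sub>2 ?\<C>\<^sub>1)"
    using is_chain_insert_above[OF is_chain_insert_above[OF \<C>(2) below_T\<^sub>1] below_T\<^sub>2] .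
  ultimately have "card (insert ?T\<^sub>2 ?\<C>\<^sub>1) \<le> height \<A>"
    using card_chain_le_height[OF fin] by blast
  moreover have "card (insert ?T\<^sub>2 ?\<C>\<^sub>1) = Suc (Suc (card ?\<B>'))"
    using card_insert_above[OF finite.insertI[OF \<open>finite \<C>\<close>] below_T\<^sub>2]
      card_insert_above[OF \<open>finite \<C>\<close> below_T\<^sub>1] \<C>(3)
    by simp
  moreover have "card ?\<B>' = card \<B> - 1" and "card \<B> > 0"
    using assms(2,4) fin finite_subset card_gt_0_iff by (auto simp: card_Diff_singleton)
  ultimately show ?thesis
    by linarith
qed

lemma card_irr_eq_1_if_height_eq_card:
  assumes "union_closed \<A>" and "separating \<A>" and "\<B> \<subseteq> \<A>" and "irredundant \<B>"
    and "height \<A> = card \<B>" and "B \<in> \<B>"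
  shows "card (irr \<B> B) = 1"
proof -
  obtain x where x: "x \<in> irr \<B> B"
    using assms(4,6) unfolding irredundant_def by blast
  have "y = x" if y: "y \<in> irr \<B> B" for y
  proof (rule ccontr)
    assume "y \<noteq> x"
    moreover have "x \<in> \<Union>\<A>" and "y \<in> \<Union>\<A>"
      using x y assms(3,6) unfolding irr_def by auto
    ultimately obtain A where "A \<in> \<A>" "x \<in> A \<and> y \<notin> A \<or> y \<in> A \<and> x \<notin> A"
      using assms(2) unfolding separating_def by metis
    then show False
      using card_less_height_if_irr_separated[OF assms(1,3,4,6)] x y assms(5) by auto
  qed
  then have "irr \<B> B = {x}"
    using x by blast
  then show ?thesis by simp
qed

theorem propositionK:
  fixes \<A> \<B> :: "nat set set" and n :: nat
  assumes "union_closed \<A>" and "separating \<A>" and "\<Union>\<A> = {1..n}"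
    and "height \<A> = 4"
    and "is_B_choice \<A> n \<B>" and "card \<B> = 4"
  shows "\<forall>B\<in>\<B>. card (irr \<B> B) = 1"
proof -
  have "\<B> \<subseteq> \<A>" and "irredundant \<B>"
    using assms(5) unfolding is_B_choice_def small_members_def Let_def by auto
  then show ?thesis
    using card_irr_eq_1_if_height_eq_card[OF assms(1,2)] assms(4,6) by simp
qed

end
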